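(* For all integers $d_1,d_2\geq3$, $R_{d_1,d_2}(W_{d_1}\otimes W_{d_2})\leq 2d_1+2d_2-1$.
   Context: Identify $S^d\mathbb{C}^2$ with binary forms of degree $d$ in a basis $\{x,y\}$; $W_d=x^{d-1}y$. The partially symmetric rank $R_{d_1,d_2}(T)$ of $T\in S^{d_1}\mathbb{C}^2\otimes S^{d_2}\mathbb{C}^2$ is the minimal $r$ such that $T=\sum_{i=1}^r v_{i,1}^{\otimes d_1}\otimes v_{i,2}^{\otimes d_2}$ with $v_{i,j}\in\mathbb{C}^2$. *)

theory Defs
  imports Complex_Main
begin

text \<open>Binary forms of degree d in the basis x, y are represented by their
  polynomial functions on C^2 (over the infinite field C a form is determined
  by its values).  An element of S^d1 C^2 (x) S^d2 C^2 is a bihomogeneous form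
  of bidegree (d1,d2) in variables (x,y) and (u,w), represented as a function
  of four complex arguments.  The tensor v^(x d) for v = (a,b) is the form
  (a x + b y)^d.\<close>

type_synonym biform = "complex \<Rightarrow> complex \<Rightarrow> complex \<Rightarrow> complex \<Rightarrow> complex"

definition lin_form :: "complex \<times> complex \<Rightarrow> complex \<Rightarrow> complex \<Rightarrow> complex" where
  "lin_form v x y = fst v * x + snd v * y"

definition W :: "nat \<Rightarrow> complex \<Rightarrow> complex \<Rightarrow> complex" where
  "W d x y = x ^ (d - 1) * y"

definition tensor_forms ::
  "(complex \<Rightarrow> complex \<Rightarrow> complex) \<Rightarrow> (complex \<Rightarrow> complex \<Rightarrow> complex) \<Rightarrow> biform" where
  "tensor_forms f g = (\<lambda>x y u w. f x y * g u w)"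

definition ps_decomposition :: "nat \<Rightarrow> nat \<Rightarrow> biform \<Rightarrow> nat \<Rightarrow> bool" where
  "ps_decomposition d1 d2 T r \<longleftrightarrow>
     (\<exists>v1 v2 :: nat \<Rightarrow> complex \<times> complex.
        \<forall>x y u w. T x y u w =
          (\<Sum>i<r. lin_form (v1 i) x y ^ d1 * lin_form (v2 i) u w ^ d2))"

definition ps_rank :: "nat \<Rightarrow> nat \<Rightarrow> biform \<Rightarrow> nat" where
  "ps_rank d1 d2 T = (LEAST r. ps_decomposition d1 d2 T r)"

end

theory Submission
  imports Defs "HOL-Analysis.Complex_Transcendental"
begin

text \<open>Let \<zeta> be a primitive N-th root of unity, N = d1 + d2 - 1. Averaging
  \<zeta>^(-2j) (x + \<zeta>^j y)^d1 (u + \<zeta>^j w)^d2 over j < N (with \<zeta>^(-2j) written as \<zeta>^((N-2)j))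
  picks out the coefficient of s^2 in (x + s y)^d1 (u + s w)^d2, since no exponent of s exceeds
  N + 1. That coefficient is d1 d2 W_d1 \<otimes> W_d2 plus the two terms (d1 choose 2) x^(d1-2) y^2 \<otimes> u^d2
  and x^d1 \<otimes> (d2 choose 2) u^(d2-2) w^2, and the same averaging over d_i-th roots of unity writes
  each of these as a sum of d_i products of powers of linear forms. Scalars are absorbed by
  taking d1-th roots, leaving N + d1 + d2 = 2 d1 + 2 d2 - 1 terms.\<close>

definition root_unity :: "nat \<Rightarrow> complex" where
  "root_unity n = exp (2 * of_real pi * \<i> / of_nat n)"

lemma root_unity_power_eq_1_iff:
  assumes "n \<ge> 1"
  shows "root_unity n ^ k = 1 \<longleftrightarrow> n dvd k"
proof -
  have "root_unity n ^ k = exp (2 * of_real pi * \<i> * of_nat k / of_nat n)"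
    unfolding root_unity_def exp_of_nat_mult[symmetric] by (simp add: field_simps)
  thus ?thesis using complex_root_unity_eq_1[OF assms] by simp
qed

lemma sum_root_unity_powers:
  assumes "n \<ge> 1"
  shows "(\<Sum>j<n. root_unity n ^ (j * e)) = (if n dvd e then of_nat n else 0)"
proof (cases "n dvd e")
  case True
  then have "root_unity n ^ (j * e) = 1" for j
    using root_unity_power_eq_1_iff[OF assms] by (simp add: dvd_mult)
  thus ?thesis using True by simp
next
  case False
  let ?w = "root_unity n ^ e"
  have "?w \<noteq> 1" using False root_unity_power_eq_1_iff[OF assms] by simp
  have "(\<Sum>j<n. root_unity n ^ (j * e)) = (\<Sum>j<n. ?w ^ j)"
    by (simp add: power_mult[symmetric] mult.commute)
  also have "\<dots> = (?w ^ n - 1) / (?w - 1)" using \<open>?w \<noteq> 1\<close> by (rule geometric_sum)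
  also have "?w ^ n = (root_unity n ^ n) ^ e" by (simp add: power_mult[symmetric] mult.commute)
  also have "root_unity n ^ n = 1" using root_unity_power_eq_1_iff[OF assms] by simp
  finally show ?thesis using False by simp
qed

lemma dvd_add_diff_iff_mod_eq:
  fixes n m e :: nat
  assumes "m < n"
  shows "n dvd (n - m + e) \<longleftrightarrow> e mod n = m"
proof -
  have "n dvd (n - m + e) \<longleftrightarrow> n dvd (n - m + e mod n)"
    by (metis mod_add_right_eq mod_eq_0_iff_dvd)
  also have "\<dots> \<longleftrightarrow> n - m + e mod n = n"
  proof
    assume "n dvd (n - m + e mod n)"
    then obtain q where q: "n - m + e mod n = n * q" ..
    have "0 < n * q" "n * q < n * 2"
      using assms mod_less_divisor[of n e] unfolding q[symmetric] by linarith+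
    then have "0 < q" "q < 2" by simp_all
    then have "q = 1" by simp
    with q show "n - m + e mod n = n" by simp
  qed simp
  also have "\<dots> \<longleftrightarrow> e mod n = m" using assms by linarith
  finally show ?thesis .
qed

lemma root_unity_filter:
  fixes a :: "'k \<Rightarrow> complex" and e :: "'k \<Rightarrow> nat"
  assumes "finite K" "m < n"
  shows "(\<Sum>j<n. root_unity n ^ ((n - m) * j) * (\<Sum>k\<in>K. a k * root_unity n ^ (j * e k)))
         = of_nat n * (\<Sum>k | k \<in> K \<and> e k mod n = m. a k)"
proof -
  have "(\<Sum>j<n. root_unity n ^ ((n - m) * j) * (\<Sum>k\<in>K. a k * root_unity n ^ (j * e k)))
      = (\<Sum>k\<in>K. a k * (\<Sum>j<n. root_unity n ^ (j * (n - m + e k))))"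
    unfolding sum_distrib_left sum_distrib_right
    by (subst sum.swap) (simp add: power_add[symmetric] algebra_simps)
  also have "\<dots> = (\<Sum>k\<in>K. if e k mod n = m then a k * of_nat n else 0)"
  proof (intro sum.cong refl)
    fix k
    have "n \<ge> 1" using assms(2) by simp
    show "a k * (\<Sum>j<n. root_unity n ^ (j * (n - m + e k)))
        = (if e k mod n = m then a k * of_nat n else 0)"
      unfolding sum_root_unity_powers[OF \<open>n \<ge> 1\<close>] dvd_add_diff_iff_mod_eq[OF assms(2)] by simp
  qed
  also have "\<dots> = of_nat n * (\<Sum>k | k \<in> K \<and> e k mod n = m. a k)"
    using assms(1) by (simp add: sum.inter_filter sum_distrib_left mult.commute if_distrib cong: if_cong)
  finally show ?thesis .
qed

lemma mod_eq_iff_eq_if_le_Suc: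
  fixes e n m :: nat
  assumes "e \<le> n + 1" "2 \<le> m" "m < n"
  shows "e mod n = m \<longleftrightarrow> e = m"
proof (cases "e < n")
  case False
  then consider "e = n" | "e = n + 1" using assms(1) by linarith
  then show ?thesis using assms(2,3) by cases (auto simp: mod_Suc)
qed (simp add: assms)

lemma binomial_power_in_parameter:
  "(x + s * y :: complex) ^ d = (\<Sum>i\<le>d. (of_nat (d choose i) * y ^ i * x ^ (d - i)) * s ^ i)"
  by (subst add.commute, subst binomial_ring) (simp add: power_mult_distrib algebra_simps)

lemma root_unity_sum_power_quadratic_coeff:
  fixes x y :: complex
  assumes "d \<ge> 3"
  shows "(\<Sum>j<d. root_unity d ^ ((d - 2) * j) * (x + root_unity d ^ j * y) ^ d)
    = of_nat d * (of_nat (d choose 2) * y ^ 2 * x ^ (d - 2))"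
proof -
  have "(\<Sum>j<d. root_unity d ^ ((d - 2) * j) * (x + root_unity d ^ j * y) ^ d)
      = (\<Sum>j<d. root_unity d ^ ((d - 2) * j) *
          (\<Sum>i\<le>d. (of_nat (d choose i) * y ^ i * x ^ (d - i)) * root_unity d ^ (j * id i)))"
    by (simp add: binomial_power_in_parameter power_mult)
  also have "\<dots> = of_nat d * (\<Sum>i | i \<in> {..d} \<and> id i mod d = 2.
                                  of_nat (d choose i) * y ^ i * x ^ (d - i))"
    using assms by (intro root_unity_filter) auto
  also have "{i. i \<in> {..d} \<and> id i mod d = 2} = {2}"
    using assms mod_eq_iff_eq_if_le_Suc[of _ d 2] by auto
  finally show ?thesis by simp
qed

lemma root_unity_sum_product_quadratic_coeff:
  fixes x y u w :: complex
  assumes "d1 \<ge> 3" "d2 \<ge> 3"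
  defines "N \<equiv> d1 + d2 - 1"
  shows "(\<Sum>j<N. root_unity N ^ ((N - 2) * j) *
            ((x + root_unity N ^ j * y) ^ d1 * (u + root_unity N ^ j * w) ^ d2))
    = of_nat N * (of_nat (d1 choose 2) * y ^ 2 * x ^ (d1 - 2) * u ^ d2
       + of_nat d1 * of_nat d2 * (x ^ (d1 - 1) * y) * (u ^ (d2 - 1) * w)
       + x ^ d1 * (of_nat (d2 choose 2) * w ^ 2 * u ^ (d2 - 2)))"
proof -
  define c where "c ik = (of_nat (d1 choose fst ik) * y ^ fst ik * x ^ (d1 - fst ik)) *
     (of_nat (d2 choose snd ik) * w ^ snd ik * u ^ (d2 - snd ik))" for ik
  let ?K = "{..d1} \<times> {..d2}"
  have expand: "(x + s * y) ^ d1 * (u + s * w) ^ d2 = (\<Sum>ik\<in>?K. c ik * s ^ (fst ik + snd ik))"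
    for s
    unfolding binomial_power_in_parameter sum_product sum.cartesian_product c_def
    by (rule sum.cong) (auto simp: power_add algebra_simps)
  have "(\<Sum>j<N. root_unity N ^ ((N - 2) * j) *
            ((x + root_unity N ^ j * y) ^ d1 * (u + root_unity N ^ j * w) ^ d2))
     = (\<Sum>j<N. root_unity N ^ ((N - 2) * j) *
            (\<Sum>ik\<in>?K. c ik * root_unity N ^ (j * (fst ik + snd ik))))"
    by (simp add: expand power_mult)
  also have "\<dots> = of_nat N * (\<Sum>ik | ik \<in> ?K \<and> (fst ik + snd ik) mod N = 2. c ik)"
    using assms by (intro root_unity_filter) auto
  also have "{ik. ik \<in> ?K \<and> (fst ik + snd ik) mod N = 2} = {(2,0), (1,1), (0,2)}"
    using assms mod_eq_iff_eq_if_le_Suc[of _ N 2] by auto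
  also have "(\<Sum>ik\<in>{(2,0), (1,1), (0,2)}. c ik) = c (2,0) + c (1,1) + c (0,2)"
    by simp
  finally show ?thesis using assms by (simp add: c_def algebra_simps)
qed

lemma tensor_W_eq_root_unity_sums:
  assumes "d1 \<ge> 3" "d2 \<ge> 3"
  defines "N \<equiv> d1 + d2 - 1"
    and "c \<equiv> \<lambda>n j. root_unity n ^ ((n - 2) * j)"
    and "p \<equiv> \<lambda>n j. (1::complex, root_unity n ^ j)"
    and "e \<equiv> \<lambda>j::nat. (1::complex, 0::complex)"
  shows "tensor_forms (W d1) (W d2) = (\<lambda>x y u w.
      (\<Sum>j<N. c N j / (of_nat N * of_nat d1 * of_nat d2)
              * lin_form (p N j) x y ^ d1 * lin_form (p N j) u w ^ d2)
    + (\<Sum>j<d1. - c d1 j / (of_nat d1 * of_nat d1 * of_nat d2)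
              * lin_form (p d1 j) x y ^ d1 * lin_form (e j) u w ^ d2)
    + (\<Sum>j<d2. - c d2 j / (of_nat d2 * of_nat d1 * of_nat d2)
              * lin_form (e j) x y ^ d1 * lin_form (p d2 j) u w ^ d2))"
    (is "?T = (\<lambda>x y u w. ?F1 x y u w + ?F2 x y u w + ?F3 x y u w)")
proof (intro ext)
  fix x y u w :: complex
  have "N \<noteq> 0" "d1 \<noteq> 0" "d2 \<noteq> 0" using assms(1,2) by (auto simp: N_def)
  then have nonzero: "(of_nat N :: complex) \<noteq> 0" "(of_nat d1 :: complex) \<noteq> 0"
      "(of_nat d2 :: complex) \<noteq> 0"
    by simp_all
  have F1: "?F1 x y u w = (\<Sum>j<N. root_unity N ^ ((N - 2) * j) *
          ((x + root_unity N ^ j * y) ^ d1 * (u + root_unity N ^ j * w) ^ d2))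
        / (of_nat N * of_nat d1 * of_nat d2)"
    by (simp add: c_def p_def lin_form_def sum_divide_distrib algebra_simps)
  have F2: "?F2 x y u w =
      - (\<Sum>j<d1. root_unity d1 ^ ((d1 - 2) * j) * (x + root_unity d1 ^ j * y) ^ d1)
        * u ^ d2 / (of_nat d1 * of_nat d1 * of_nat d2)"
    by (simp add: c_def p_def e_def lin_form_def sum_divide_distrib sum_distrib_left
        sum_negf algebra_simps)
  have F3: "?F3 x y u w =
      - (\<Sum>j<d2. root_unity d2 ^ ((d2 - 2) * j) * (u + root_unity d2 ^ j * w) ^ d2)
        * x ^ d1 / (of_nat d2 * of_nat d1 * of_nat d2)"
    by (simp add: c_def p_def e_def lin_form_def sum_divide_distrib sum_distrib_left
        sum_negf algebra_simps)
  show "tensor_forms (W d1) (W d2) x y u w = ?F1 x y u w + ?F2 x y u w + ?F3 x y u w"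
    unfolding F1 F2 F3 root_unity_sum_power_quadratic_coeff[OF assms(1)]
      root_unity_sum_power_quadratic_coeff[OF assms(2)]
      root_unity_sum_product_quadratic_coeff[OF assms(1,2), folded N_def]
    using nonzero by (simp add: tensor_forms_def W_def field_simps)
qed

lemma ex_complex_nth_root:
  assumes "n > 0"
  shows "\<exists>z::complex. z ^ n = c"
proof (cases "c = 0")
  case True
  then show ?thesis using assms by (intro exI[of _ 0]) simp
next
  case False
  have "exp (Ln c / of_nat n) ^ n = exp (of_nat n * (Ln c / of_nat n))"
    by (rule exp_of_nat_mult[symmetric])
  also have "\<dots> = c" using assms False by simp
  finally show ?thesis by blast
qed

lemma ps_decomposition_add:
  assumes "ps_decomposition d1 d2 T1 r1" "ps_decomposition d1 d2 T2 r2"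
  shows "ps_decomposition d1 d2 (\<lambda>x y u w. T1 x y u w + T2 x y u w) (r1 + r2)"
proof -
  obtain a1 b1 where T1: "\<And>x y u w. T1 x y u w =
      (\<Sum>i<r1. lin_form (a1 i) x y ^ d1 * lin_form (b1 i) u w ^ d2)"
    using assms(1) unfolding ps_decomposition_def by blast
  obtain a2 b2 where T2: "\<And>x y u w. T2 x y u w =
      (\<Sum>i<r2. lin_form (a2 i) x y ^ d1 * lin_form (b2 i) u w ^ d2)"
    using assms(2) unfolding ps_decomposition_def by blast
  define v1 where "v1 i = (if i < r1 then a1 i else a2 (i - r1))" for i
  define v2 where "v2 i = (if i < r1 then b1 i else b2 (i - r1))" for i
  let ?f = "\<lambda>x y u w i. lin_form (v1 i) x y ^ d1 * lin_form (v2 i) u w ^ d2"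
  have "T1 x y u w + T2 x y u w = (\<Sum>i<r1 + r2. ?f x y u w i)" for x y u w
  proof -
    have "(\<Sum>i<r1 + r2. ?f x y u w i)
        = (\<Sum>i\<in>{0..<r1}. ?f x y u w i) + (\<Sum>i\<in>{r1..<r1 + r2}. ?f x y u w i)"
      by (simp add: lessThan_atLeast0 sum.atLeastLessThan_concat)
    also have "(\<Sum>i\<in>{r1..<r1 + r2}. ?f x y u w i) = (\<Sum>i\<in>{0..<r2}. ?f x y u w (i + r1))"
      using sum.shift_bounds_nat_ivl[of "?f x y u w" 0 r1 r2] by (simp add: add.commute)
    finally show ?thesis
      by (simp add: T1 T2 v1_def v2_def lessThan_atLeast0)
  qed
  then show ?thesis unfolding ps_decomposition_def by blast
qed

lemma ps_decomposition_weighted_sum: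
  assumes "d1 > 0"
  shows "ps_decomposition d1 d2
    (\<lambda>x y u w. \<Sum>j<n. a j * lin_form (p j) x y ^ d1 * lin_form (q j) u w ^ d2) n"
proof -
  have "\<forall>j. \<exists>z. z ^ d1 = a j" using ex_complex_nth_root[OF assms] by blast
  then obtain k where k: "\<And>j. k j ^ d1 = a j" by metis
  define v where "v j = (k j * fst (p j), k j * snd (p j))" for j
  have "lin_form (v j) x y = k j * lin_form (p j) x y" for j x y
    by (simp add: v_def lin_form_def algebra_simps)
  then have "lin_form (v j) x y ^ d1 = a j * lin_form (p j) x y ^ d1" for j x y
    by (simp add: power_mult_distrib k)
  then show ?thesis unfolding ps_decomposition_def
    by (intro exI[of _ v] exI[of _ q]) simp
qed

lemma ps_rank_le:
  "ps_decomposition d1 d2 T r \<Longrightarrow> ps_rank d1 d2 T \<le> r"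
  unfolding ps_rank_def by (rule Least_le)

theorem proposition3p5:
  fixes d1 d2 :: nat
  assumes "d1 \<ge> 3" and "d2 \<ge> 3"
  shows "ps_rank d1 d2 (tensor_forms (W d1) (W d2)) \<le> 2 * d1 + 2 * d2 - 1"
proof -
  have "d1 > 0" using assms by simp
  then have "ps_decomposition d1 d2 (tensor_forms (W d1) (W d2)) ((d1 + d2 - 1) + d1 + d2)"
    unfolding tensor_W_eq_root_unity_sums[OF assms]
    by (intro ps_decomposition_add ps_decomposition_weighted_sum)
  then have "ps_rank d1 d2 (tensor_forms (W d1) (W d2)) \<le> (d1 + d2 - 1) + d1 + d2"
    by (rule ps_rank_le)
  also have "\<dots> = 2 * d1 + 2 * d2 - 1" using assms by simp
  finally show ?thesis .
qed

end
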